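(* Let $\alpha>1$, $\varepsilon>0$, $\delta\in(0,1)$, and let $\pi^*$ be the optimal partition selection primitive ($\pi^*(0)=0$, $\pi^*(n)=L(\pi^*(n-1))$ with $L(q)=\max\{p\in[q,1]: D^\delta_\alpha(\mathrm{Ber}(p)\|\mathrm{Ber}(q))\le\varepsilon\text{ and } D^\delta_\alpha(\mathrm{Ber}(q)\|\mathrm{Ber}(p))\le\varepsilon\}$). Then $\pi^*$ is non-decreasing, $n_d := \min\{n\in\mathbb{N}:\pi^*(n)=1\}$ is finite with $n_d\le\lceil1/\delta\rceil$, the function $\Pi(x) = \pi^*(n_d-x)-\pi^*(n_d-1-x)$ for $x\in\{0,\dots,n_d-1\}$ is a probability distribution, and with $\tau = n_d-1$ we have, for all $n\in\mathbb{Z}_{\ge0}$, $$\Pr_{Z\sim\Pi}(n+Z>\tau) = \pi^*(n).$$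
   Context: $\mathrm{Ber}(p)$: Bernoulli distribution. For $\alpha>1$, $D_\alpha(P\|Q)=\frac{1}{\alpha-1}\log\sum_x P(x)^\alpha Q(x)^{1-\alpha}$ and $D^\delta_\alpha(P\|Q)=\inf\{D_\alpha(P'\|Q'): P=(1-\delta)P'+\delta P'',\ Q=(1-\delta)Q'+\delta Q''\}$ over probability distributions. *)

theory Defs
  imports Complex_Main "HOL-Library.Extended_Real"
begin

text \<open>Probability distributions on the two-point space (the support of Bernoulli
  distributions). All distributions in the decomposition defining the approximate
  Renyi divergence are necessarily supported on this space.\<close>

definition is_pdist :: "(bool \<Rightarrow> real) \<Rightarrow> bool" where
  "is_pdist P \<longleftrightarrow> (\<forall>x. 0 \<le> P x) \<and> (\<Sum>x\<in>UNIV. P x) = 1"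

definition Ber :: "real \<Rightarrow> bool \<Rightarrow> real" where
  "Ber p = (\<lambda>x. if x then p else 1 - p)"

definition renyi :: "real \<Rightarrow> (bool \<Rightarrow> real) \<Rightarrow> (bool \<Rightarrow> real) \<Rightarrow> ereal" where
  "renyi \<alpha> P Q =
     (if (\<exists>x. P x > 0 \<and> Q x = 0) then \<infinity>
      else ereal (1 / (\<alpha> - 1) *
             ln (\<Sum>x\<in>{x. P x > 0}. P x powr \<alpha> * Q x powr (1 - \<alpha>))))"

definition renyi_approx :: "real \<Rightarrow> real \<Rightarrow> (bool \<Rightarrow> real) \<Rightarrow> (bool \<Rightarrow> real) \<Rightarrow> ereal" where
  "renyi_approx \<alpha> \<delta> P Q =
     Inf {renyi \<alpha> P' Q' | P' Q' P'' Q''.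
            is_pdist P' \<and> is_pdist Q' \<and> is_pdist P'' \<and> is_pdist Q'' \<and>
            (\<forall>x. P x = (1 - \<delta>) * P' x + \<delta> * P'' x) \<and>
            (\<forall>x. Q x = (1 - \<delta>) * Q' x + \<delta> * Q'' x)}"

definition Lstep :: "real \<Rightarrow> real \<Rightarrow> real \<Rightarrow> real \<Rightarrow> real" where
  "Lstep \<alpha> \<epsilon> \<delta> q =
     (GREATEST p. p \<in> {q..1} \<and>
        renyi_approx \<alpha> \<delta> (Ber p) (Ber q) \<le> ereal \<epsilon> \<and>
        renyi_approx \<alpha> \<delta> (Ber q) (Ber p) \<le> ereal \<epsilon>)"

fun pi_star :: "real \<Rightarrow> real \<Rightarrow> real \<Rightarrow> nat \<Rightarrow> real" where
  "pi_star \<alpha> \<epsilon> \<delta> 0 = 0"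
| "pi_star \<alpha> \<epsilon> \<delta> (Suc n) = Lstep \<alpha> \<epsilon> \<delta> (pi_star \<alpha> \<epsilon> \<delta> n)"

end

theory Submission
  imports Defs
begin

text \<open>Two properties of a single step \<open>L\<close> of \<open>\<pi>\<^sup>*\<close> drive the theorem.
  Bernoulli distributions at distance at most \<open>\<delta>\<close> have approximate divergence \<open>0\<close>, since both
  are of the form \<open>(1 - \<delta>) Ber r + \<delta> P''\<close> for a common \<open>r\<close>; hence \<open>L q \<ge> min (q + \<delta>) 1\<close>
  and \<open>\<pi>\<^sup>*\<close> reaches \<open>1\<close> within \<open>\<lceil>1 / \<delta>\<rceil>\<close> steps. And \<open>L q\<close> is a genuine maximum: beyond
  \<open>q + \<delta>\<close> the optimal decomposition reduces \<open>D\<^sup>\<delta>\<^sub>\<alpha>(Ber p \<parallel> Ber q)\<close> to the plain divergence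
  between \<open>Ber ((p - \<delta>) / (1 - \<delta>))\<close> and \<open>Ber (q / (1 - \<delta>))\<close>, which depends continuously on
  \<open>p\<close>, so the feasible set is compact. Monotonicity of \<open>\<pi>\<^sup>*\<close> makes the reversed increments
  \<open>\<Pi>\<close> nonnegative, and the tail identity is a telescoping sum.\<close>

lemma is_pdist_Ber: "0 \<le> r \<Longrightarrow> r \<le> 1 \<Longrightarrow> is_pdist (Ber r)"
  by (auto simp: is_pdist_def Ber_def UNIV_bool)

lemma is_pdist_imp_Ber:
  assumes "is_pdist P"
  shows "P = Ber (P True)" "0 \<le> P True" "P True \<le> 1"
proof -
  have "P True + P False = 1" "0 \<le> P True" "0 \<le> P False"
    using assms by (auto simp: is_pdist_def UNIV_bool)
  then show "P = Ber (P True)" "0 \<le> P True" "P True \<le> 1"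
    by (auto simp: Ber_def fun_eq_iff)
qed

text \<open>For \<open>a, b \<in> [0, 1]\<close> this is \<open>exp ((\<alpha> - 1) D\<^sub>\<alpha>(Ber a \<parallel> Ber b))\<close> whenever
  the divergence is finite; otherwise it is a junk value, since \<open>0 powr x = 0\<close>.\<close>

definition Ber_moment :: "real \<Rightarrow> real \<Rightarrow> real \<Rightarrow> real" where
  "Ber_moment \<alpha> a b = a powr \<alpha> * b powr (1 - \<alpha>) + (1 - a) powr \<alpha> * (1 - b) powr (1 - \<alpha>)"

lemma Ber_moment_compl: "Ber_moment \<alpha> (1 - a) (1 - b) = Ber_moment \<alpha> a b"
  by (simp add: Ber_moment_def)

lemma Ber_moment_pos:
  assumes "0 \<le> a" "a \<le> 1" "0 \<le> b" "b \<le> 1" "b = 0 \<longrightarrow> a = 0" "b = 1 \<longrightarrow> a = 1"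
  shows "0 < Ber_moment \<alpha> a b"
proof (cases "a > 0")
  case True
  then have "0 < a powr \<alpha> * b powr (1 - \<alpha>)" using assms by simp
  then show ?thesis unfolding Ber_moment_def by (simp add: add_pos_nonneg)
next
  case False
  then have "0 < (1 - a) powr \<alpha> * (1 - b) powr (1 - \<alpha>)" using assms by simp
  then show ?thesis unfolding Ber_moment_def by (simp add: add_nonneg_pos)
qed

lemma renyi_Ber:
  assumes "0 \<le> a" "a \<le> 1" "0 \<le> b" "b \<le> 1"
  shows "renyi \<alpha> (Ber a) (Ber b) =
    (if (b = 0 \<longrightarrow> a = 0) \<and> (b = 1 \<longrightarrow> a = 1)
     then ereal (ln (Ber_moment \<alpha> a b) / (\<alpha> - 1)) else \<infinity>)"
proof -
  have singular: "(\<exists>x. Ber a x > 0 \<and> Ber b x = 0) \<longleftrightarrow> \<not> ((b = 0 \<longrightarrow> a = 0) \<and> (b = 1 \<longrightarrow> a = 1))"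
    unfolding ex_bool_eq Ber_def using assms by auto
  have "(\<Sum>x\<in>{x. Ber a x > 0}. Ber a x powr \<alpha> * Ber b x powr (1 - \<alpha>))
      = (\<Sum>x\<in>UNIV. if Ber a x > 0 then Ber a x powr \<alpha> * Ber b x powr (1 - \<alpha>) else 0)"
    by (simp add: sum.If_cases)
  also have "\<dots> = Ber_moment \<alpha> a b"
    using assms by (auto simp: UNIV_bool Ber_def Ber_moment_def)
  finally show ?thesis unfolding renyi_def singular by simp
qed

lemma renyi_Ber_self: "0 \<le> r \<Longrightarrow> r \<le> 1 \<Longrightarrow> renyi \<alpha> (Ber r) (Ber r) = 0"
  by (simp add: renyi_Ber Ber_moment_def powr_add[symmetric] zero_ereal_def)

lemma renyi_Ber_compl:
  "0 \<le> a \<Longrightarrow> a \<le> 1 \<Longrightarrow> 0 \<le> b \<Longrightarrow> b \<le> 1 \<Longrightarrow>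
    renyi \<alpha> (Ber (1 - a)) (Ber (1 - b)) = renyi \<alpha> (Ber a) (Ber b)"
  by (auto simp: renyi_Ber Ber_moment_compl)

lemma renyi_Ber_le_iff:
  assumes "\<alpha> > 1" "0 \<le> a" "a \<le> 1" "0 \<le> b" "b \<le> 1"
  shows "renyi \<alpha> (Ber a) (Ber b) \<le> ereal \<epsilon> \<longleftrightarrow>
    (b = 0 \<longrightarrow> a = 0) \<and> (b = 1 \<longrightarrow> a = 1) \<and> Ber_moment \<alpha> a b \<le> exp ((\<alpha> - 1) * \<epsilon>)"
proof (cases "(b = 0 \<longrightarrow> a = 0) \<and> (b = 1 \<longrightarrow> a = 1)")
  case True
  then have "0 < Ber_moment \<alpha> a b" using assms by (intro Ber_moment_pos) auto
  moreover have "ln (Ber_moment \<alpha> a b) / (\<alpha> - 1) \<le> \<epsilon> \<longleftrightarrow> ln (Ber_moment \<alpha> a b) \<le> (\<alpha> - 1) * \<epsilon>"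
    using assms(1) by (simp add: divide_le_eq mult.commute)
  ultimately have "ln (Ber_moment \<alpha> a b) / (\<alpha> - 1) \<le> \<epsilon> \<longleftrightarrow> Ber_moment \<alpha> a b \<le> exp ((\<alpha> - 1) * \<epsilon>)"
    by (metis exp_le_cancel_iff exp_ln)
  then show ?thesis using True assms by (simp add: renyi_Ber)
qed (use assms in \<open>auto simp: renyi_Ber\<close>)

lemma powr_mult_powr_minus:
  fixes t b c :: real
  assumes "0 < b" "0 \<le> t"
  shows "t powr c * b powr (- c) = (t / b) powr c"
  using assms powr_divide[of t b c] by (simp add: powr_minus divide_inverse)

lemma Ber_moment_mono_left:
  assumes "\<alpha> > 1" "0 < b" "b < 1" "b \<le> x" "x \<le> y" "y \<le> 1"
  shows "Ber_moment \<alpha> x b \<le> Ber_moment \<alpha> y b"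
proof -
  define c1 c2 where "c1 = b powr (1 - \<alpha>)" and "c2 = (1 - b) powr (1 - \<alpha>)"
  define f where "f = (\<lambda>t. t powr \<alpha> * c1 + (1 - t) powr \<alpha> * c2)"
  have "f x \<le> f y"
  proof (rule DERIV_nonneg_imp_increasing_open[OF \<open>x \<le> y\<close>])
    fix t assume "x < t" "t < y"
    then have t: "b < t" "t < 1" using assms by auto
    have deriv: "(f has_real_derivative \<alpha> * (t powr (\<alpha> - 1) * c1 - (1 - t) powr (\<alpha> - 1) * c2)) (at t)"
      unfolding f_def using t assms by (auto intro!: derivative_eq_intros simp: algebra_simps)
    have "1 \<le> (t / b) powr (\<alpha> - 1)" using t assms by (intro ge_one_powr_ge_zero) auto
    then have "1 \<le> t powr (\<alpha> - 1) * c1"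
      using t assms powr_mult_powr_minus[of b t "\<alpha> - 1"] by (simp add: c1_def)
    moreover have "((1 - t) / (1 - b)) powr (\<alpha> - 1) \<le> 1" using t assms by (intro powr_le1) auto
    then have "(1 - t) powr (\<alpha> - 1) * c2 \<le> 1"
      using t assms powr_mult_powr_minus[of "1 - b" "1 - t" "\<alpha> - 1"] by (simp add: c2_def)
    ultimately have "0 \<le> \<alpha> * (t powr (\<alpha> - 1) * c1 - (1 - t) powr (\<alpha> - 1) * c2)"
      using assms by (intro mult_nonneg_nonneg) auto
    with deriv show "\<exists>d. (f has_real_derivative d) (at t) \<and> 0 \<le> d" by blast
  next
    show "continuous_on {x..y} f"
      unfolding f_def using assms by (intro continuous_on_powr' continuous_intros) auto
  qed
  then show ?thesis by (simp add: f_def c1_def c2_def Ber_moment_def)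
qed

lemma Ber_moment_antimono_right:
  assumes "\<alpha> > 1" "0 < x" "x \<le> y" "y < a" "a \<le> 1"
  shows "Ber_moment \<alpha> a y \<le> Ber_moment \<alpha> a x"
proof -
  define c1 c2 where "c1 = a powr \<alpha>" and "c2 = (1 - a) powr \<alpha>"
  define f where "f = (\<lambda>t. c1 * t powr (1 - \<alpha>) + c2 * (1 - t) powr (1 - \<alpha>))"
  have "f y \<le> f x"
  proof (rule DERIV_nonpos_imp_decreasing_open[OF \<open>x \<le> y\<close>])
    fix t assume "x < t" "t < y"
    then have t: "0 < t" "t < a" using assms by auto
    have deriv: "(f has_real_derivative (1 - \<alpha>) * (c1 * t powr (- \<alpha>) - c2 * (1 - t) powr (- \<alpha>))) (at t)"
      unfolding f_def using t assms by (auto intro!: derivative_eq_intros simp: algebra_simps)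
    have "1 \<le> (a / t) powr \<alpha>" using t assms by (intro ge_one_powr_ge_zero) auto
    then have "1 \<le> c1 * t powr (- \<alpha>)"
      using t powr_mult_powr_minus[of t a \<alpha>] by (simp add: c1_def)
    moreover have "((1 - a) / (1 - t)) powr \<alpha> \<le> 1" using t assms by (intro powr_le1) auto
    then have "c2 * (1 - t) powr (- \<alpha>) \<le> 1"
      using t assms powr_mult_powr_minus[of "1 - t" "1 - a" \<alpha>] by (simp add: c2_def)
    ultimately have "(1 - \<alpha>) * (c1 * t powr (- \<alpha>) - c2 * (1 - t) powr (- \<alpha>)) \<le> 0"
      using assms by (intro mult_nonpos_nonneg) auto
    with deriv show "\<exists>d. (f has_real_derivative d) (at t) \<and> d \<le> 0" by blast
  next
    show "continuous_on {x..y} f"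
      unfolding f_def using assms by (intro continuous_on_powr' continuous_intros) auto
  qed
  then show ?thesis by (simp add: f_def c1_def c2_def Ber_moment_def)
qed

lemma renyi_Ber_mono:
  assumes "\<alpha> > 1" "0 \<le> b" "b \<le> b'" "b' < a'" "a' \<le> a" "a \<le> 1"
  shows "renyi \<alpha> (Ber a') (Ber b') \<le> renyi \<alpha> (Ber a) (Ber b)"
proof (cases "b = 0")
  case True
  then show ?thesis using assms by (simp add: renyi_Ber)
next
  case False
  then have b: "0 < b" "b < 1" using assms by auto
  have "Ber_moment \<alpha> a' b' \<le> Ber_moment \<alpha> a' b"
    using assms b by (intro Ber_moment_antimono_right) auto
  also have "\<dots> \<le> Ber_moment \<alpha> a b"
    using assms b by (intro Ber_moment_mono_left) auto
  finally have "ln (Ber_moment \<alpha> a' b') / (\<alpha> - 1) \<le> ln (Ber_moment \<alpha> a b) / (\<alpha> - 1)"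
    using assms b Ber_moment_pos[of a' b' \<alpha>] by (intro divide_right_mono) auto
  then show ?thesis using assms b by (simp add: renyi_Ber)
qed

lemma renyi_Ber_mono':
  assumes "\<alpha> > 1" "0 \<le> a" "a \<le> a'" "a' < b'" "b' \<le> b" "b \<le> 1"
  shows "renyi \<alpha> (Ber a') (Ber b') \<le> renyi \<alpha> (Ber a) (Ber b)"
  using renyi_Ber_mono[of \<alpha> "1 - b" "1 - b'" "1 - a'" "1 - a"] assms
  by (simp add: renyi_Ber_compl)

lemma renyi_approx_Ber_le:
  assumes "0 \<le> a" "a \<le> 1" "0 \<le> a2" "a2 \<le> 1" "0 \<le> b" "b \<le> 1" "0 \<le> b2" "b2 \<le> 1"
    and "p = (1 - \<delta>) * a + \<delta> * a2" "q = (1 - \<delta>) * b + \<delta> * b2"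
  shows "renyi_approx \<alpha> \<delta> (Ber p) (Ber q) \<le> renyi \<alpha> (Ber a) (Ber b)"
  unfolding renyi_approx_def
proof (rule Inf_lower, intro CollectI exI conjI)
  show "is_pdist (Ber a)" "is_pdist (Ber b)" "is_pdist (Ber a2)" "is_pdist (Ber b2)"
    using assms by (auto intro: is_pdist_Ber)
  show "\<forall>x. Ber p x = (1 - \<delta>) * Ber a x + \<delta> * Ber a2 x"
    "\<forall>x. Ber q x = (1 - \<delta>) * Ber b x + \<delta> * Ber b2 x"
    using assms by (auto simp: Ber_def algebra_simps)
qed (rule refl)

lemma renyi_approx_Ber_ge:
  assumes "0 < \<delta>" "\<delta> < 1"
    and "\<And>a b. 0 \<le> a \<Longrightarrow> a \<le> 1 \<Longrightarrow> 0 \<le> b \<Longrightarrow> b \<le> 1 \<Longrightarrow>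
       p - \<delta> \<le> (1 - \<delta>) * a \<Longrightarrow> (1 - \<delta>) * a \<le> p \<Longrightarrow>
       q - \<delta> \<le> (1 - \<delta>) * b \<Longrightarrow> (1 - \<delta>) * b \<le> q \<Longrightarrow> X \<le> renyi \<alpha> (Ber a) (Ber b)"
  shows "X \<le> renyi_approx \<alpha> \<delta> (Ber p) (Ber q)"
  unfolding renyi_approx_def
proof (rule Inf_greatest, clarify)
  fix P' Q' P'' Q''
  assume pd: "is_pdist P'" "is_pdist Q'" "is_pdist P''" "is_pdist Q''"
    and "\<forall>x. Ber p x = (1 - \<delta>) * P' x + \<delta> * P'' x" "\<forall>x. Ber q x = (1 - \<delta>) * Q' x + \<delta> * Q'' x"
  then have p: "p = (1 - \<delta>) * P' True + \<delta> * P'' True"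
    and q: "q = (1 - \<delta>) * Q' True + \<delta> * Q'' True"
    by (metis Ber_def)+
  note Ber = is_pdist_imp_Ber[OF pd(1)] is_pdist_imp_Ber[OF pd(2)]
    is_pdist_imp_Ber[OF pd(3)] is_pdist_imp_Ber[OF pd(4)]
  have "\<delta> * P'' True \<le> \<delta>" "\<delta> * Q'' True \<le> \<delta>"
    using Ber assms(1) by (auto intro: mult_left_le)
  moreover have "0 \<le> \<delta> * P'' True" "0 \<le> \<delta> * Q'' True"
    using Ber assms(1) by auto
  ultimately have "X \<le> renyi \<alpha> (Ber (P' True)) (Ber (Q' True))"
    using Ber p q by (intro assms(3)) auto
  then show "X \<le> renyi \<alpha> P' Q'" using Ber by metis
qed

lemma renyi_approx_Ber_close:
  assumes "0 < \<delta>" "\<delta> < 1" "0 \<le> a" "a \<le> 1" "0 \<le> b" "b \<le> 1" "a \<le> b + \<delta>" "b \<le> a + \<delta>"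
  shows "renyi_approx \<alpha> \<delta> (Ber a) (Ber b) \<le> 0"
proof -
  define r where "r = max 0 (max a b - \<delta>) / (1 - \<delta>)"
  have r: "(1 - \<delta>) * r = max 0 (max a b - \<delta>)" using assms(2) by (simp add: r_def)
  have "0 \<le> r" "r \<le> 1" using assms by (auto simp: r_def field_simps)
  moreover have "0 \<le> (a - (1 - \<delta>) * r) / \<delta>" "(a - (1 - \<delta>) * r) / \<delta> \<le> 1"
    "0 \<le> (b - (1 - \<delta>) * r) / \<delta>" "(b - (1 - \<delta>) * r) / \<delta> \<le> 1"
    using assms unfolding r by (auto simp: field_simps)
  ultimately have "renyi_approx \<alpha> \<delta> (Ber a) (Ber b) \<le> renyi \<alpha> (Ber r) (Ber r)"
    using assms(1)
    by (intro renyi_approx_Ber_le[of r "(a - (1 - \<delta>) * r) / \<delta>" r "(b - (1 - \<delta>) * r) / \<delta>"]) auto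
  then show ?thesis using \<open>0 \<le> r\<close> \<open>r \<le> 1\<close> by (simp add: renyi_Ber_self)
qed

text \<open>The optimal decomposition puts the \<open>\<delta>\<close>-mass of \<open>Ber p\<close> on \<open>True\<close> and that of
  \<open>Ber q\<close> on \<open>False\<close>, which brings the main components as close together as possible.\<close>

lemma renyi_approx_Ber_far:
  assumes "\<alpha> > 1" "0 < \<delta>" "\<delta> < 1" "0 \<le> q" "q + \<delta> < p" "p \<le> 1"
  shows "renyi_approx \<alpha> \<delta> (Ber p) (Ber q) = renyi \<alpha> (Ber ((p - \<delta>) / (1 - \<delta>))) (Ber (q / (1 - \<delta>)))"
    and "renyi_approx \<alpha> \<delta> (Ber q) (Ber p) = renyi \<alpha> (Ber (q / (1 - \<delta>))) (Ber ((p - \<delta>) / (1 - \<delta>)))"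
proof -
  define u v where "u = (p - \<delta>) / (1 - \<delta>)" and "v = q / (1 - \<delta>)"
  have u: "(1 - \<delta>) * u = p - \<delta>" and v: "(1 - \<delta>) * v = q"
    using assms by (simp_all add: u_def v_def)
  have uv: "0 \<le> v" "v < u" "u \<le> 1"
    using assms by (auto simp: u_def v_def divide_strict_right_mono)
  have "renyi_approx \<alpha> \<delta> (Ber p) (Ber q) \<le> renyi \<alpha> (Ber u) (Ber v)"
    using uv u v by (intro renyi_approx_Ber_le[of u 1 v 0]) (auto simp: algebra_simps)
  moreover have "renyi \<alpha> (Ber u) (Ber v) \<le> renyi_approx \<alpha> \<delta> (Ber p) (Ber q)"
  proof (rule renyi_approx_Ber_ge[OF assms(2,3)])
    fix a b assume "0 \<le> a" "a \<le> 1" "0 \<le> b" "b \<le> 1"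
      "p - \<delta> \<le> (1 - \<delta>) * a" "(1 - \<delta>) * b \<le> q"
    moreover from this have "u \<le> a" "b \<le> v"
      using assms(3) u v by (auto intro: mult_left_le_imp_le[of "1 - \<delta>"])
    ultimately show "renyi \<alpha> (Ber u) (Ber v) \<le> renyi \<alpha> (Ber a) (Ber b)"
      using uv by (intro renyi_Ber_mono[OF assms(1)]) auto
  qed
  ultimately show "renyi_approx \<alpha> \<delta> (Ber p) (Ber q) = renyi \<alpha> (Ber u) (Ber v)" by simp
  have "renyi_approx \<alpha> \<delta> (Ber q) (Ber p) \<le> renyi \<alpha> (Ber v) (Ber u)"
    using uv u v by (intro renyi_approx_Ber_le[of v 0 u 1]) (auto simp: algebra_simps)
  moreover have "renyi \<alpha> (Ber v) (Ber u) \<le> renyi_approx \<alpha> \<delta> (Ber q) (Ber p)"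
  proof (rule renyi_approx_Ber_ge[OF assms(2,3)])
    fix a b assume "0 \<le> a" "a \<le> 1" "0 \<le> b" "b \<le> 1"
      "(1 - \<delta>) * a \<le> q" "p - \<delta> \<le> (1 - \<delta>) * b"
    moreover from this have "a \<le> v" "u \<le> b"
      using assms(3) u v by (auto intro: mult_left_le_imp_le[of "1 - \<delta>"])
    ultimately show "renyi \<alpha> (Ber v) (Ber u) \<le> renyi \<alpha> (Ber a) (Ber b)"
      using uv by (intro renyi_Ber_mono'[OF assms(1)]) auto
  qed
  ultimately show "renyi_approx \<alpha> \<delta> (Ber q) (Ber p) = renyi \<alpha> (Ber v) (Ber u)" by simp
qed

lemma closed_renyi_Ber_sublevel:
  assumes "\<alpha> > 1" "0 \<le> v"
  shows "closed {u \<in> {v..1}. renyi \<alpha> (Ber u) (Ber v) \<le> ereal \<epsilon> \<and> renyi \<alpha> (Ber v) (Ber u) \<le> ereal \<epsilon>}"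
    (is "closed ?S")
proof (cases "0 < v \<and> v < 1")
  case False
  then have "?S \<subseteq> {v}" using assms by (auto simp: renyi_Ber split: if_splits)
  then show ?thesis by (meson finite.emptyI finite_imp_closed finite_insert finite_subset)
next
  case True
  then have v: "0 < v" "v < 1" by auto
  define C where "C = exp ((\<alpha> - 1) * \<epsilon>)"
  define H where "H u = v powr \<alpha> * u powr (1 - \<alpha>) * (1 - u) powr (\<alpha> - 1) + (1 - v) powr \<alpha>
    - C * (1 - u) powr (\<alpha> - 1)" for u
  \<comment> \<open>the factor \<open>(1 - u) powr (\<alpha> - 1)\<close> cancels the pole of \<open>Ber_moment \<alpha> v u\<close> at \<open>u = 1\<close>\<close>
  have "renyi \<alpha> (Ber v) (Ber u) \<le> ereal \<epsilon> \<longleftrightarrow> H u \<le> 0" if "v \<le> u" "u \<le> 1" for u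
  proof (cases "u = 1")
    case True
    have "0 < (1 - v) powr \<alpha>" using v(2) by simp
    then show ?thesis using True v assms(1) that by (simp add: renyi_Ber_le_iff H_def)
  next
    case False
    then have w: "0 < (1 - u) powr (\<alpha> - 1)" using that by simp
    have "(1 - u) powr (1 - \<alpha>) * (1 - u) powr (\<alpha> - 1) = 1"
      using False that by (simp add: powr_add[symmetric])
    then have "Ber_moment \<alpha> v u * (1 - u) powr (\<alpha> - 1) = H u + C * (1 - u) powr (\<alpha> - 1)"
      by (simp add: Ber_moment_def H_def algebra_simps)
    then have "Ber_moment \<alpha> v u \<le> C \<longleftrightarrow> H u \<le> 0"
      using w by (metis add_le_same_cancel2 mult_le_cancel_right_pos)
    then show ?thesis using False v that assms(1) by (simp add: renyi_Ber_le_iff C_def)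
  qed
  moreover have "renyi \<alpha> (Ber u) (Ber v) \<le> ereal \<epsilon> \<longleftrightarrow> Ber_moment \<alpha> u v \<le> C"
    if "v \<le> u" "u \<le> 1" for u
    using v that assms(1) by (simp add: renyi_Ber_le_iff C_def)
  ultimately have "?S = ((\<lambda>u. Ber_moment \<alpha> u v) -` {..C} \<inter> {v..1}) \<inter> (H -` {..0} \<inter> {v..1})"
    by auto
  moreover have "continuous_on {v..1} (\<lambda>u. Ber_moment \<alpha> u v)"
    unfolding Ber_moment_def using v assms(1)
    by (intro continuous_on_powr' continuous_intros) auto
  moreover have "continuous_on {v..1} H"
    unfolding H_def using v assms(1)
    by (intro continuous_on_powr' continuous_intros) auto
  ultimately show ?thesis
    by (metis closed_Int closed_atLeastAtMost closed_atMost closed_vimage_Int)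
qed

definition Lstep_set :: "real \<Rightarrow> real \<Rightarrow> real \<Rightarrow> real \<Rightarrow> real set" where
  "Lstep_set \<alpha> \<epsilon> \<delta> q = {p \<in> {q..1}.
     renyi_approx \<alpha> \<delta> (Ber p) (Ber q) \<le> ereal \<epsilon> \<and> renyi_approx \<alpha> \<delta> (Ber q) (Ber p) \<le> ereal \<epsilon>}"

context
  fixes \<alpha> \<epsilon> \<delta> :: real
  assumes \<alpha>: "\<alpha> > 1" and \<epsilon>: "0 \<le> \<epsilon>" and \<delta>: "0 < \<delta>" "\<delta> < 1"
begin

lemma mem_Lstep_set_close:
  "0 \<le> q \<Longrightarrow> q \<le> p \<Longrightarrow> p \<le> 1 \<Longrightarrow> p \<le> q + \<delta> \<Longrightarrow> p \<in> Lstep_set \<alpha> \<epsilon> \<delta> q"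
  using renyi_approx_Ber_close[OF \<delta>, of p q \<alpha>] renyi_approx_Ber_close[OF \<delta>, of q p \<alpha>] \<epsilon>
  by (auto simp: Lstep_set_def intro: order_trans)

lemma closed_Lstep_set:
  assumes "0 \<le> q" "q \<le> 1"
  shows "closed (Lstep_set \<alpha> \<epsilon> \<delta> q)"
proof -
  define u where "u p = (p - \<delta>) / (1 - \<delta>)" for p
  define B where "B = {u \<in> {q / (1 - \<delta>)..1}.
    renyi \<alpha> (Ber u) (Ber (q / (1 - \<delta>))) \<le> ereal \<epsilon> \<and> renyi \<alpha> (Ber (q / (1 - \<delta>))) (Ber u) \<le> ereal \<epsilon>}"
  have "p \<in> Lstep_set \<alpha> \<epsilon> \<delta> q \<longleftrightarrow> p \<in> {q..min (q + \<delta>) 1} \<union> (u -` B \<inter> {q..1})" for p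
  proof (cases "q \<le> p \<and> p \<le> 1 \<and> q + \<delta> < p")
    case True
    then have "q / (1 - \<delta>) \<le> u p" "u p \<le> 1"
      using \<delta> by (auto simp: u_def divide_right_mono)
    then show ?thesis
      using True renyi_approx_Ber_far[OF \<alpha> \<delta> assms(1), of p] by (auto simp: Lstep_set_def B_def u_def)
  next
    case False
    moreover have "u p \<in> B \<Longrightarrow> q + \<delta> \<le> p"
      using \<delta> by (auto simp: B_def u_def divide_le_cancel)
    ultimately show ?thesis
      using mem_Lstep_set_close[of q p] assms by (auto simp: Lstep_set_def)
  qed
  then have "Lstep_set \<alpha> \<epsilon> \<delta> q = {q..min (q + \<delta>) 1} \<union> (u -` B \<inter> {q..1})" by blast
  moreover have "continuous_on {q..1} u" unfolding u_def by (intro continuous_intros) (use \<delta> in auto)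
  moreover have "closed B" unfolding B_def using \<alpha> \<delta> assms by (intro closed_renyi_Ber_sublevel) auto
  ultimately show ?thesis by (simp add: closed_Un closed_vimage_Int)
qed

lemma Lstep_bounds:
  assumes "0 \<le> q" "q \<le> 1"
  shows "q \<le> Lstep \<alpha> \<epsilon> \<delta> q" "Lstep \<alpha> \<epsilon> \<delta> q \<le> 1" "min (q + \<delta>) 1 \<le> Lstep \<alpha> \<epsilon> \<delta> q"
proof -
  let ?S = "Lstep_set \<alpha> \<epsilon> \<delta> q"
  have "?S = {q..1} \<inter> ?S" by (auto simp: Lstep_set_def)
  then have "compact ?S" by (metis compact_Int_closed compact_Icc closed_Lstep_set[OF assms])
  moreover have "q \<in> ?S" using assms \<delta> by (intro mem_Lstep_set_close) auto
  ultimately obtain m where m: "m \<in> ?S" "\<And>p. p \<in> ?S \<Longrightarrow> p \<le> m"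
    by (metis compact_attains_sup empty_iff)
  have "Lstep \<alpha> \<epsilon> \<delta> q = (GREATEST p. p \<in> ?S)" by (simp add: Lstep_def Lstep_set_def)
  also have "\<dots> = m" using m by (rule Greatest_equality)
  finally have "Lstep \<alpha> \<epsilon> \<delta> q = m" .
  moreover have "min (q + \<delta>) 1 \<le> m"
    using assms \<delta> by (intro m(2) mem_Lstep_set_close) auto
  ultimately show "q \<le> Lstep \<alpha> \<epsilon> \<delta> q" "Lstep \<alpha> \<epsilon> \<delta> q \<le> 1" "min (q + \<delta>) 1 \<le> Lstep \<alpha> \<epsilon> \<delta> q"
    using m(1) by (auto simp: Lstep_set_def)
qed

lemma pi_star_bounds: "0 \<le> pi_star \<alpha> \<epsilon> \<delta> n" "pi_star \<alpha> \<epsilon> \<delta> n \<le> 1"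
proof (induction n)
  case (Suc n)
  then show "0 \<le> pi_star \<alpha> \<epsilon> \<delta> (Suc n)" "pi_star \<alpha> \<epsilon> \<delta> (Suc n) \<le> 1"
    using Lstep_bounds[of "pi_star \<alpha> \<epsilon> \<delta> n"] by auto
qed simp_all

lemma pi_star_le_Suc: "pi_star \<alpha> \<epsilon> \<delta> n \<le> pi_star \<alpha> \<epsilon> \<delta> (Suc n)"
  and pi_star_Suc_ge: "min (pi_star \<alpha> \<epsilon> \<delta> n + \<delta>) 1 \<le> pi_star \<alpha> \<epsilon> \<delta> (Suc n)"
  using Lstep_bounds[OF pi_star_bounds] by simp_all

lemma mono_pi_star: "mono (pi_star \<alpha> \<epsilon> \<delta>)"
  by (rule mono_iff_le_Suc[THEN iffD2]) (use pi_star_le_Suc in blast)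

lemma pi_star_ge: "min (real n * \<delta>) 1 \<le> pi_star \<alpha> \<epsilon> \<delta> n"
proof (induction n)
  case (Suc n)
  have "min (real (Suc n) * \<delta>) 1 \<le> min (pi_star \<alpha> \<epsilon> \<delta> n + \<delta>) 1"
    using Suc \<delta> by (auto simp: algebra_simps min_def split: if_splits)
  then show ?case using pi_star_Suc_ge[of n] by linarith
qed simp

lemma pi_star_eq_1: "1 \<le> real n * \<delta> \<Longrightarrow> pi_star \<alpha> \<epsilon> \<delta> n = 1"
  using pi_star_ge[of n] pi_star_bounds(2)[of n] by linarith

end

lemma sum_reversed_increments:
  fixes g :: "nat \<Rightarrow> 'a :: ab_group_add"
  assumes "0 < N"
  shows "(\<Sum>x\<in>{x\<in>{0..N - 1}. n + x > N - 1}. g (N - x) - g (N - 1 - x)) = g (min n N) - g 0"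
proof -
  have "(\<Sum>x\<in>{x\<in>{0..N - 1}. n + x > N - 1}. g (N - x) - g (N - 1 - x)) = (\<Sum>k<min n N. g (Suc k) - g k)"
    by (rule sum.reindex_bij_witness[of _ "\<lambda>k. N - 1 - k" "\<lambda>x. N - 1 - x"])
      (use assms in \<open>auto simp: Suc_diff_Suc\<close>)
  also have "\<dots> = g (min n N) - g 0" by (rule sum_lessThan_telescope)
  finally show ?thesis .
qed

lemma reversed_increments_distribution:
  fixes g :: "nat \<Rightarrow> real"
  assumes "mono g" "g 0 = 0" "g N = 1" "\<And>n. g n \<le> 1" and nd: "nd = (LEAST n. g n = 1)"
  shows "\<forall>x\<in>{0..nd - 1}. 0 \<le> g (nd - x) - g (nd - 1 - x)"
    and "(\<Sum>x\<in>{0..nd - 1}. g (nd - x) - g (nd - 1 - x)) = 1"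
    and "\<forall>n. (\<Sum>x\<in>{x\<in>{0..nd - 1}. n + x > nd - 1}. g (nd - x) - g (nd - 1 - x)) = g n"
proof -
  have "g nd = 1" using assms(3) unfolding nd by (rule LeastI)
  then have "0 < nd" using assms(2) by (cases nd) auto
  have "g (min n nd) = g n" for n
    using \<open>g nd = 1\<close> assms(1,4) by (metis min_def monoD nle_le order_antisym)
  then show tail: "\<forall>n. (\<Sum>x\<in>{x\<in>{0..nd - 1}. n + x > nd - 1}. g (nd - x) - g (nd - 1 - x)) = g n"
    using sum_reversed_increments[OF \<open>0 < nd\<close>, of g] assms(2) by simp
  have "{x\<in>{0..nd - 1}. nd + x > nd - 1} = {0..nd - 1}" using \<open>0 < nd\<close> by auto
  then show "(\<Sum>x\<in>{0..nd - 1}. g (nd - x) - g (nd - 1 - x)) = 1"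
    using tail \<open>g nd = 1\<close> by metis
  show "\<forall>x\<in>{0..nd - 1}. 0 \<le> g (nd - x) - g (nd - 1 - x)"
    using assms(1) by (auto simp: monoD)
qed

theorem mainTheorem10:
  fixes \<alpha> \<epsilon> \<delta> :: real
  assumes "\<alpha> > 1" and "\<epsilon> > 0" and "0 < \<delta>" and "\<delta> < 1"
  shows "mono (pi_star \<alpha> \<epsilon> \<delta>) \<and>
         (\<exists>n. pi_star \<alpha> \<epsilon> \<delta> n = 1) \<and>
         (let nd = (LEAST n. pi_star \<alpha> \<epsilon> \<delta> n = 1);
              \<Pi> = (\<lambda>x. pi_star \<alpha> \<epsilon> \<delta> (nd - x) - pi_star \<alpha> \<epsilon> \<delta> (nd - 1 - x));
              \<tau> = nd - 1
          in real nd \<le> of_int \<lceil>1 / \<delta>\<rceil> \<and>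
             (\<forall>x\<in>{0..nd - 1}. 0 \<le> \<Pi> x) \<and>
             (\<Sum>x\<in>{0..nd - 1}. \<Pi> x) = 1 \<and>
             (\<forall>n::nat. (\<Sum>x\<in>{x\<in>{0..nd - 1}. n + x > \<tau>}. \<Pi> x) = pi_star \<alpha> \<epsilon> \<delta> n))"
proof -
  note \<pi>_facts = mono_pi_star pi_star_eq_1 pi_star_bounds(2)
  note \<pi>_facts = \<pi>_facts[OF assms(1) less_imp_le[OF assms(2)] assms(3,4)]
  define nd where "nd = (LEAST n. pi_star \<alpha> \<epsilon> \<delta> n = 1)"
  have "1 / \<delta> \<le> real (nat \<lceil>1 / \<delta>\<rceil>)" by (rule real_nat_ceiling_ge)
  then have "1 \<le> real (nat \<lceil>1 / \<delta>\<rceil>) * \<delta>" using assms(3) by (simp only: pos_divide_le_eq)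
  then have reach: "pi_star \<alpha> \<epsilon> \<delta> (nat \<lceil>1 / \<delta>\<rceil>) = 1" by (rule \<pi>_facts(2))
  then have "real nd \<le> real (nat \<lceil>1 / \<delta>\<rceil>)" unfolding nd_def by (intro of_nat_mono Least_le)
  also have "\<dots> = of_int \<lceil>1 / \<delta>\<rceil>" using assms(3) by simp
  finally show ?thesis
    unfolding Let_def nd_def[symmetric]
    using \<pi>_facts(1) reach
      reversed_increments_distribution[OF \<pi>_facts(1) pi_star.simps(1) reach \<pi>_facts(3) nd_def]
    by auto
qed

end
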